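(* For the graph orientation problem on bipartite graphs with arbitrary query costs, \textsc{BestVC} is $\frac43$-competitive, i.e., $\mathbb E[\textsc{BestVC}]\le\frac43\mathbb E[\mathrm{OPT}]$ for every such instance.
   Context: An instance of the graph orientation problem consists of a graph $G=(V,E)$ and, for each vertex $v$, a query cost $c_v\ge0$ and a continuous distribution $d_v$ with minimal support interval $I_v=(\ell_v,r_v)$; it is assumed that for each edge the two intervals intersect and neither contains the other. Weights $w_v\sim d_v$ are independent and querying $v$ reveals $w_v$ at cost $c_v$. For a realization, $Q$ is a feasible query set if knowing $w_u$ for $u\in Q$ and only the intervals for unqueried vertices suffices to identify, for every edge, its endpoint of minimum weight; $\mathbb E[\mathrm{OPT}]$ is the expected minimum cost of a feasible query set. A vertex is mandatory if it belongs to every feasible query set; $p_v$ is the probability that $v$ is mandatory. A vertex cover-based algorithm first queries a vertex cover $VC$ of $G$ and then queries all vertices of $V\setminus VC$ that are mandatory; its expected cost is $\sum_{v\in V}p_vc_v+\sum_{v\in VC}(1-p_v)c_v$. \textsc{BestVC} is the vertex cover-based algorithm whose vertex cover $VC$ minimizes $\sum_{v\in VC}(1-p_v)c_v$ among all vertex covers of $G$. *)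

theory Defs
  imports "HOL-Probability.Probability"
begin

text \<open>The graph has vertex set V and edge set E,
  given as ordered pairs (each undirected edge may be listed in either or both
  orientations). Vertex v has open uncertainty interval from l v to r v.\<close>

definition bipartite :: "'a set \<Rightarrow> ('a \<times> 'a) set \<Rightarrow> bool" where
  "bipartite V E \<longleftrightarrow> (\<exists>A \<subseteq> V. \<forall>(u, v) \<in> E. (u \<in> A \<longleftrightarrow> v \<notin> A))"

definition vertex_cover :: "'a set \<Rightarrow> ('a \<times> 'a) set \<Rightarrow> 'a set \<Rightarrow> bool" where
  "vertex_cover V E C \<longleftrightarrow> C \<subseteq> V \<and> (\<forall>(u, v) \<in> E. u \<in> C \<or> v \<in> C)"

definition consistent ::
  "'a set \<Rightarrow> ('a \<Rightarrow> real) \<Rightarrow> ('a \<Rightarrow> real) \<Rightarrow> ('a \<Rightarrow> real) \<Rightarrow> 'a set \<Rightarrow> ('a \<Rightarrow> real) \<Rightarrow> bool" where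
  "consistent V l r w Q w' \<longleftrightarrow>
     (\<forall>y \<in> V. if y \<in> Q then w' y = w y else w' y \<in> {l y<..<r y})"

definition feasible ::
  "'a set \<Rightarrow> ('a \<times> 'a) set \<Rightarrow> ('a \<Rightarrow> real) \<Rightarrow> ('a \<Rightarrow> real) \<Rightarrow> ('a \<Rightarrow> real) \<Rightarrow> 'a set \<Rightarrow> bool" where
  "feasible V E l r w Q \<longleftrightarrow> Q \<subseteq> V \<and>
     (\<forall>(u, v) \<in> E.
        (\<forall>w'. consistent V l r w Q w' \<longrightarrow> w' u \<le> w' v) \<or>
        (\<forall>w'. consistent V l r w Q w' \<longrightarrow> w' v \<le> w' u))"

definition opt_cost ::
  "'a set \<Rightarrow> ('a \<times> 'a) set \<Rightarrow> ('a \<Rightarrow> real) \<Rightarrow> ('a \<Rightarrow> real) \<Rightarrow> ('a \<Rightarrow> real) \<Rightarrow> ('a \<Rightarrow> real) \<Rightarrow> real" where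
  "opt_cost V E l r c w = Min ((\<lambda>Q. sum c Q) ` {Q. feasible V E l r w Q})"

definition mandatory ::
  "'a set \<Rightarrow> ('a \<times> 'a) set \<Rightarrow> ('a \<Rightarrow> real) \<Rightarrow> ('a \<Rightarrow> real) \<Rightarrow> ('a \<Rightarrow> real) \<Rightarrow> 'a \<Rightarrow> bool" where
  "mandatory V E l r w v \<longleftrightarrow> v \<in> V \<and> (\<forall>Q. feasible V E l r w Q \<longrightarrow> v \<in> Q)"

definition mand_prob ::
  "'a set \<Rightarrow> ('a \<times> 'a) set \<Rightarrow> ('a \<Rightarrow> real) \<Rightarrow> ('a \<Rightarrow> real) \<Rightarrow> ('a \<Rightarrow> real measure) \<Rightarrow> 'a \<Rightarrow> real" where
  "mand_prob V E l r d v =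
     measure (PiM V d) {w \<in> space (PiM V d). mandatory V E l r w v}"

definition vc_alg_cost ::
  "'a set \<Rightarrow> ('a \<times> 'a) set \<Rightarrow> ('a \<Rightarrow> real) \<Rightarrow> ('a \<Rightarrow> real) \<Rightarrow> ('a \<Rightarrow> real) \<Rightarrow> 'a set \<Rightarrow> ('a \<Rightarrow> real) \<Rightarrow> real" where
  "vc_alg_cost V E l r c C w = sum c C + sum c {v \<in> V - C. mandatory V E l r w v}"

definition bestvc_cover ::
  "'a set \<Rightarrow> ('a \<times> 'a) set \<Rightarrow> ('a \<Rightarrow> real) \<Rightarrow> ('a \<Rightarrow> real) \<Rightarrow> ('a \<Rightarrow> real) \<Rightarrow> ('a \<Rightarrow> real measure) \<Rightarrow> 'a set \<Rightarrow> bool" where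
  "bestvc_cover V E l r c d C \<longleftrightarrow> vertex_cover V E C \<and>
     (\<forall>C'. vertex_cover V E C' \<longrightarrow>
        (\<Sum>v\<in>C. (1 - mand_prob V E l r d v) * c v) \<le> (\<Sum>v\<in>C'. (1 - mand_prob V E l r d v) * c v))"

end

theory Submission
  imports Defs
begin

text \<open>A vertex is mandatory exactly when the weight of one of its neighbours falls into its
  interval, and the feasible query sets are the vertex covers containing all mandatory vertices.
  Let \<open>p\<^sub>v\<close> be the probability that v is mandatory and \<open>z\<^sub>v\<close> the
  probability that a fixed optimal solution queries v; then \<open>E[OPT] = \<Sum> c\<^sub>v z\<^sub>v\<close>
  and \<open>p\<^sub>v \<le> z\<^sub>v\<close>. In a bipartite graph adjacent vertices have disjoint
  neighbourhoods, so they are mandatory independently, and OPT contains both endpoints of an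
  edge whenever both are mandatory: \<open>z\<^sub>u + z\<^sub>v \<ge> 1 + p\<^sub>u p\<^sub>v\<close>.
  This makes \<open>x\<^sub>v = min 1 ((4/3 z\<^sub>v - p\<^sub>v) / (1 - p\<^sub>v))\<close> a fractional vertex
  cover, and threshold rounding (the bipartite vertex cover polytope is integral) turns it
  into a cover \<open>C'\<close> with \<open>\<Sum>\<^bsub>C'\<^esub> (1 - p\<^sub>v) c\<^sub>v \<le> \<Sum> (4/3 z\<^sub>v - p\<^sub>v) c\<^sub>v\<close>.
  BestVC pays \<open>\<Sum> p\<^sub>v c\<^sub>v\<close> plus the left-hand side for its own cover, which is at most
  that of \<open>C'\<close>.\<close>

section \<open>Threshold rounding of fractional vertex covers\<close>

lemma (in prob_space) exists_le_expectation:
  fixes f :: "'a \<Rightarrow> real"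
  assumes "integrable M f" and "finite (f ` space M)"
  shows "\<exists>x\<in>space M. f x \<le> expectation f"
proof -
  have "Min (f ` space M) \<in> f ` space M"
    using assms(2) not_empty by (intro Min_in) auto
  then obtain x where x: "x \<in> space M" "f x = Min (f ` space M)"
    by auto
  have "expectation (\<lambda>_. f x) \<le> expectation f"
    using assms x by (intro integral_mono) auto
  then have "f x \<le> expectation f"
    using x by (simp add: prob_space)
  with x show ?thesis
    by blast
qed

text \<open>For a uniform threshold t, the cover takes v on the side A if \<open>t \<le> x v\<close> and v on
  the other side if \<open>1 - t < x v\<close>; each threshold gives a cover, of expected weight
  \<open>\<Sum> W v * x v\<close>.\<close>
lemma bipartite_fractional_cover_rounding:
  fixes x W :: "'a \<Rightarrow> real"
  assumes "finite V"
    and edges: "\<forall>(u, v) \<in> E. u \<in> V \<and> v \<in> V \<and> (u \<in> A \<longleftrightarrow> v \<notin> A) \<and> 1 \<le> x u + x v"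
    and x01: "\<forall>v \<in> V. 0 \<le> x v \<and> x v \<le> 1"
  shows "\<exists>C. vertex_cover V E C \<and> sum W C \<le> (\<Sum>v\<in>V. W v * x v)"
proof -
  define T where "T = restrict_space lborel {0..1::real}"
  interpret T: prob_space T
    unfolding T_def by (rule prob_space_restrict_space) auto
  have space_T: "space T = {0..1}"
    by (simp add: T_def space_restrict_space)
  define S where "S v = (if v \<in> A then {0..x v} else {1 - x v<..1})" for v
  define C where "C t = {v \<in> V. t \<in> S v}" for t
  have cover: "vertex_cover V E (C t)" if "t \<in> {0..1}" for t
    using edges that unfolding vertex_cover_def C_def S_def by fastforce
  have S_integral: "has_bochner_integral T (indicator (S v)) (x v)" if "v \<in> V" for v
  proof -
    have "S v \<subseteq> {0..1}"
      using x01 that by (auto simp: S_def)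
    then have "S v \<in> sets T" "measure T (S v) = x v"
      using x01 that by (auto simp: T_def S_def sets_restrict_space_iff measure_restrict_space)
    then show ?thesis
      using has_bochner_integral_real_indicator[of "S v" T] by (simp add: less_top[symmetric])
  qed
  have "has_bochner_integral T (\<lambda>t. \<Sum>v\<in>V. W v * indicator (S v) t) (\<Sum>v\<in>V. W v * x v)"
    using S_integral by (intro has_bochner_integral_sum has_bochner_integral_mult_right)
  moreover have "sum W (C t) = (\<Sum>v\<in>V. W v * indicator (S v) t)" for t
  proof -
    have "sum W (C t) = (\<Sum>v\<in>V. if t \<in> S v then W v else 0)"
      unfolding C_def using \<open>finite V\<close> by (rule sum.inter_filter)
    also have "\<dots> = (\<Sum>v\<in>V. W v * indicator (S v) t)"
      by (intro sum.cong refl) (simp add: indicator_def)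
    finally show ?thesis .
  qed
  ultimately have integral: "has_bochner_integral T (\<lambda>t. sum W (C t)) (\<Sum>v\<in>V. W v * x v)"
    by simp
  have "(\<lambda>t. sum W (C t)) ` space T \<subseteq> sum W ` Pow V"
    by (auto simp: C_def)
  then have "finite ((\<lambda>t. sum W (C t)) ` space T)"
    by (rule finite_subset) (simp add: \<open>finite V\<close>)
  then obtain t where "t \<in> space T" "sum W (C t) \<le> T.expectation (\<lambda>t. sum W (C t))"
    using T.exists_le_expectation integrable.intros[OF integral] by blast
  then show ?thesis
    using cover space_T has_bochner_integral_integral_eq[OF integral] by auto
qed

section \<open>The scaled fractional cover\<close>

lemma inverse_sum_ge_three:
  fixes s t a b :: real
  assumes "0 < s" "s \<le> t" "t \<le> 1" "0 \<le> a" "0 \<le> b" "s * t \<le> a + b"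
  shows "3 \<le> (1 - s + 4 * a) / s + (1 - t + 4 * b) / t"
proof -
  have t_pos: "0 < t"
    using assms by linarith
  have "4 * a / t \<le> 4 * a / s"
    using assms by (intro divide_left_mono) auto
  then have "4 * (a + b) / t \<le> 4 * a / s + 4 * b / t"
    by (simp add: add_divide_distrib distrib_left)
  moreover have "4 * s \<le> 4 * (a + b) / t"
    using assms t_pos by (simp add: field_simps)
  moreover have "1 \<le> 1 / t"
    using assms t_pos by simp
  moreover have "4 \<le> 1 / s + 4 * s"
  proof -
    have "4 * s \<le> 1 + 4 * s * s"
      using zero_le_power2[of "2 * s - 1"] by (simp add: power2_eq_square algebra_simps)
    then show ?thesis
      using assms by (simp add: field_simps)
  qed
  moreover have "(1 - s + 4 * a) / s + (1 - t + 4 * b) / t = 1 / s + 1 / t - 2 + 4 * a / s + 4 * b / t"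
    using assms t_pos by (simp add: field_simps)
  ultimately show ?thesis
    by linarith
qed

text \<open>The paper's \<open>x\<^sub>v\<close> for \<open>p = p\<^sub>v\<close> and \<open>z = z\<^sub>v\<close>; the case \<open>p = 1\<close>
  avoids dividing by zero.\<close>
definition cover_weight :: "real \<Rightarrow> real \<Rightarrow> real" where
  "cover_weight p z = (if p = 1 then 1 else min 1 ((4/3 * z - p) / (1 - p)))"

lemma cover_weight_bounds:
  assumes "0 \<le> p" "p \<le> 1" "p \<le> z"
  shows "0 \<le> cover_weight p z" "cover_weight p z \<le> 1"
  using assms by (auto simp: cover_weight_def intro!: divide_nonneg_pos)

lemma cover_weight_cost:
  assumes "p \<le> 1" "p \<le> z"
  shows "(1 - p) * cover_weight p z \<le> 4/3 * z - p"
  using assms by (auto simp: cover_weight_def min_def field_simps)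

lemma cover_weight_edge:
  fixes a b y z :: real
  assumes "0 \<le> a" "a \<le> 1" "0 \<le> b" "b \<le> 1" "a \<le> y" "b \<le> z" "1 + a * b \<le> y + z"
  shows "1 \<le> cover_weight a y + cover_weight b z"
proof -
  have nonneg: "0 \<le> cover_weight a y" "0 \<le> cover_weight b z"
    using assms cover_weight_bounds by auto
  consider "a = 1" | "b = 1" | "a < 1" "b < 1"
    using assms by linarith
  then show ?thesis
  proof cases
    case 3
    define X where "X = (4/3 * y - a) / (1 - a)"
    define Y where "Y = (4/3 * z - b) / (1 - b)"
    have X: "(1 - (1 - a) + 4 * (y - a)) / (1 - a) = 3 * X"
      and Y: "(1 - (1 - b) + 4 * (z - b)) / (1 - b) = 3 * Y"
      using 3 by (simp_all add: X_def Y_def field_simps)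
    have prod: "(1 - a) * (1 - b) \<le> (y - a) + (z - b)"
      using assms by (simp add: algebra_simps)
    have "3 \<le> 3 * X + 3 * Y"
    proof (cases "1 - a \<le> 1 - b")
      case True
      then show ?thesis
        using inverse_sum_ge_three[of "1 - a" "1 - b" "y - a" "z - b"] 3 assms prod X Y by simp
    next
      case False
      then show ?thesis
        using inverse_sum_ge_three[of "1 - b" "1 - a" "z - b" "y - a"] 3 assms prod X Y
        by (simp add: mult.commute add.commute)
    qed
    moreover have "cover_weight a y = min 1 X" "cover_weight b z = min 1 Y"
      using 3 by (simp_all add: cover_weight_def X_def Y_def)
    ultimately show ?thesis
      using nonneg by linarith
  qed (use nonneg in \<open>auto simp: cover_weight_def\<close>)
qed

section \<open>Mandatory vertices and feasible query sets\<close>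

locale orientation_instance =
  fixes V :: "'a set" and E :: "('a \<times> 'a) set" and l r :: "'a \<Rightarrow> real"
  assumes finite_V: "finite V"
    and edge_vertices: "\<forall>(u, v) \<in> E. u \<in> V \<and> v \<in> V \<and> u \<noteq> v"
    and intervals_nonempty: "\<forall>v \<in> V. l v < r v"
    and edge_intervals_overlap: "\<forall>(u, v) \<in> E. {l u<..<r u} \<inter> {l v<..<r v} \<noteq> {}"
begin

definition neighbours :: "'a \<Rightarrow> 'a set" where
  "neighbours v = {u. (u, v) \<in> E \<or> (v, u) \<in> E}"

lemma neighbours_subset: "neighbours v \<subseteq> V"
  using edge_vertices unfolding neighbours_def by auto

lemma finite_neighbours: "finite (neighbours v)"
  using finite_subset[OF neighbours_subset finite_V] .

definition edge_resolved :: "('a \<Rightarrow> real) \<Rightarrow> 'a set \<Rightarrow> 'a \<Rightarrow> 'a \<Rightarrow> bool" where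
  "edge_resolved w Q a b \<longleftrightarrow>
     (\<forall>w'. consistent V l r w Q w' \<longrightarrow> w' a \<le> w' b) \<or>
     (\<forall>w'. consistent V l r w Q w' \<longrightarrow> w' b \<le> w' a)"

lemma edge_resolved_commute: "edge_resolved w Q a b \<longleftrightarrow> edge_resolved w Q b a"
  unfolding edge_resolved_def by blast

lemma feasible_iff_edges_resolved:
  "feasible V E l r w Q \<longleftrightarrow> Q \<subseteq> V \<and> (\<forall>(a, b) \<in> E. edge_resolved w Q a b)"
  unfolding feasible_def edge_resolved_def ..

lemma edge_resolved_if_known:
  assumes "a \<in> V" "b \<in> V" and "a \<in> Q" and "b \<in> Q \<or> w a \<notin> {l b<..<r b}"
  shows "edge_resolved w Q a b"
proof -
  have known_a: "w' a = w a" and known_b: "b \<in> Q \<Longrightarrow> w' b = w b"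
    and free_b: "b \<notin> Q \<Longrightarrow> l b < w' b \<and> w' b < r b"
    if "consistent V l r w Q w'" for w'
    using that assms(1-3) unfolding consistent_def by auto
  consider "b \<in> Q" | "b \<notin> Q" "w a \<le> l b" | "b \<notin> Q" "r b \<le> w a"
    using assms(4) by force
  then show ?thesis
  proof cases
    case 1
    then show ?thesis
      unfolding edge_resolved_def by (cases "w a \<le> w b") (auto simp: known_a known_b)
  next
    case 2
    then show ?thesis
      unfolding edge_resolved_def using known_a free_b by fastforce
  next
    case 3
    then show ?thesis
      unfolding edge_resolved_def using known_a free_b by fastforce
  qed
qed

text \<open>Placing the unqueried weight of b just below, resp. just above, the value of a
  (queried or not) realises both orders on the edge.\<close>
lemma edge_unresolved_if_unknown:
  assumes "(a, b) \<in> E \<or> (b, a) \<in> E" and "b \<notin> Q" and "a \<in> Q \<longrightarrow> w a \<in> {l b<..<r b}"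
  shows "\<not> edge_resolved w Q a b"
proof -
  have ab: "a \<in> V" "b \<in> V" "a \<noteq> b" and overlap: "{l a<..<r a} \<inter> {l b<..<r b} \<noteq> {}"
    using assms(1) edge_vertices edge_intervals_overlap by auto
  have "\<exists>lo hi. lo < hi \<and> lo \<in> {l b<..<r b} \<and> hi \<in> {l b<..<r b} \<and>
      (a \<notin> Q \<longrightarrow> lo \<in> {l a<..<r a} \<and> hi \<in> {l a<..<r a}) \<and> (a \<in> Q \<longrightarrow> lo < w a \<and> w a < hi)"
  proof (cases "a \<in> Q")
    case True
    then show ?thesis
      using assms(3) by (intro exI[of _ "(l b + w a) / 2"] exI[of _ "(w a + r b) / 2"]) auto
  next
    case False
    obtain m where "m \<in> {l a<..<r a} \<inter> {l b<..<r b}"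
      using overlap by blast
    then show ?thesis
      using False
      by (intro exI[of _ "(max (l a) (l b) + m) / 2"] exI[of _ "(m + min (r a) (r b)) / 2"]) auto
  qed
  then obtain lo hi where lohi: "lo < hi" "lo \<in> {l b<..<r b}" "hi \<in> {l b<..<r b}"
    and a_between: "a \<notin> Q \<Longrightarrow> lo \<in> {l a<..<r a} \<and> hi \<in> {l a<..<r a}"
    and a_known: "a \<in> Q \<Longrightarrow> lo < w a \<and> w a < hi"
    by blast
  define w1 where "w1 y = (if y \<in> Q then w y else if y = b then lo else if y = a then hi else (l y + r y) / 2)" for y
  define w2 where "w2 y = (if y \<in> Q then w y else if y = b then hi else if y = a then lo else (l y + r y) / 2)" for y
  have "consistent V l r w Q w1" "consistent V l r w Q w2"
    using lohi a_between intervals_nonempty ab assms(2) unfolding consistent_def w1_def w2_def by auto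
  moreover have "w1 b < w1 a" "w2 a < w2 b"
    using lohi a_known ab assms(2) unfolding w1_def w2_def by auto
  ultimately show ?thesis
    unfolding edge_resolved_def by force
qed

lemma edge_resolved_iff:
  assumes "(a, b) \<in> E \<or> (b, a) \<in> E"
  shows "edge_resolved w Q a b \<longleftrightarrow>
    (b \<in> Q \<or> a \<in> Q \<and> w a \<notin> {l b<..<r b}) \<and> (a \<in> Q \<or> b \<in> Q \<and> w b \<notin> {l a<..<r a})"
proof
  assume "edge_resolved w Q a b"
  moreover have "edge_resolved w Q b a \<Longrightarrow> a \<in> Q \<or> b \<in> Q \<and> w b \<notin> {l a<..<r a}"
    using edge_unresolved_if_unknown[of b a] assms by blast
  ultimately show "(b \<in> Q \<or> a \<in> Q \<and> w a \<notin> {l b<..<r b}) \<and> (a \<in> Q \<or> b \<in> Q \<and> w b \<notin> {l a<..<r a})"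
    using edge_unresolved_if_unknown[of a b] assms edge_resolved_commute by blast
next
  assume known: "(b \<in> Q \<or> a \<in> Q \<and> w a \<notin> {l b<..<r b}) \<and> (a \<in> Q \<or> b \<in> Q \<and> w b \<notin> {l a<..<r a})"
  have "a \<in> V" "b \<in> V"
    using assms edge_vertices by auto
  then show "edge_resolved w Q a b"
    using known edge_resolved_if_known[of a b Q w] edge_resolved_if_known[of b a Q w]
      edge_resolved_commute by blast
qed

lemma mandatory_iff:
  "mandatory V E l r w v \<longleftrightarrow> v \<in> V \<and> (\<exists>u \<in> neighbours v. w u \<in> {l v<..<r v})"
proof
  assume mandatory: "mandatory V E l r w v"
  then have "v \<in> V"
    unfolding mandatory_def by blast
  moreover have "\<exists>u \<in> neighbours v. w u \<in> {l v<..<r v}"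
  proof (rule ccontr)
    assume "\<not> ?thesis"
    then have "edge_resolved w (V - {v}) a b" if "(a, b) \<in> E" for a b
      using that edge_vertices by (subst edge_resolved_iff) (auto simp: neighbours_def)
    then have "feasible V E l r w (V - {v})"
      unfolding feasible_iff_edges_resolved by blast
    then show False
      using mandatory unfolding mandatory_def by blast
  qed
  ultimately show "v \<in> V \<and> (\<exists>u \<in> neighbours v. w u \<in> {l v<..<r v})" ..
next
  assume "v \<in> V \<and> (\<exists>u \<in> neighbours v. w u \<in> {l v<..<r v})"
  then obtain u where "v \<in> V" "(u, v) \<in> E \<or> (v, u) \<in> E" "w u \<in> {l v<..<r v}"
    unfolding neighbours_def by blast
  then show "mandatory V E l r w v"
    unfolding mandatory_def feasible_iff_edges_resolved
    using edge_resolved_iff[of u v] edge_resolved_commute by (metis case_prodD)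
qed

lemma feasible_iff_cover_of_mandatory:
  "feasible V E l r w Q \<longleftrightarrow> vertex_cover V E Q \<and> {v. mandatory V E l r w v} \<subseteq> Q"
proof
  assume feasible: "feasible V E l r w Q"
  then have "vertex_cover V E Q"
    unfolding feasible_iff_edges_resolved vertex_cover_def using edge_resolved_iff by blast
  moreover have "{v. mandatory V E l r w v} \<subseteq> Q"
    using feasible unfolding mandatory_def by blast
  ultimately show "vertex_cover V E Q \<and> {v. mandatory V E l r w v} \<subseteq> Q" ..
next
  assume cover: "vertex_cover V E Q \<and> {v. mandatory V E l r w v} \<subseteq> Q"
  have "edge_resolved w Q a b" if "(a, b) \<in> E" for a b
  proof -
    have "a \<in> neighbours b" "b \<in> neighbours a" "a \<in> V" "b \<in> V"
      using that edge_vertices unfolding neighbours_def by auto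
    then show ?thesis
      using cover that mandatory_iff[of w a] mandatory_iff[of w b]
      unfolding edge_resolved_iff[OF disjI1[OF that]] vertex_cover_def by blast
  qed
  then show "feasible V E l r w Q"
    using cover unfolding feasible_iff_edges_resolved vertex_cover_def by blast
qed

lemma bipartite_edge_neighbours_disjoint:
  assumes "bipartite V E" and "(u, v) \<in> E"
  shows "neighbours u \<inter> neighbours v = {}"
proof -
  obtain A where A: "\<forall>(a, b) \<in> E. a \<in> A \<longleftrightarrow> b \<notin> A"
    using assms(1) unfolding bipartite_def by blast
  have side: "x \<in> A \<longleftrightarrow> y \<notin> A" if "y \<in> neighbours x" for x y
    using that A unfolding neighbours_def by auto
  have "x \<notin> neighbours u \<inter> neighbours v" for x
  proof
    assume "x \<in> neighbours u \<inter> neighbours v"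
    then have "u \<in> A \<longleftrightarrow> x \<notin> A" "v \<in> A \<longleftrightarrow> x \<notin> A"
      using side by auto
    moreover have "u \<in> A \<longleftrightarrow> v \<notin> A"
      using A assms(2) by auto
    ultimately show False
      by blast
  qed
  then show ?thesis
    by blast
qed

definition mandatory_set :: "('a \<Rightarrow> real) \<Rightarrow> 'a set" where
  "mandatory_set w = {v \<in> V. mandatory V E l r w v}"

lemma mandatory_set_subset: "mandatory_set w \<subseteq> V"
  unfolding mandatory_set_def by blast

definition opt_cover :: "('a \<Rightarrow> real) \<Rightarrow> 'a set \<Rightarrow> 'a set" where
  "opt_cover c S = arg_min_on (sum c) {Q. vertex_cover V E Q \<and> S \<subseteq> Q}"

lemma opt_cover:
  assumes "S \<subseteq> V"
  shows "vertex_cover V E (opt_cover c S)" "S \<subseteq> opt_cover c S"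
    and "vertex_cover V E Q \<Longrightarrow> S \<subseteq> Q \<Longrightarrow> sum c (opt_cover c S) \<le> sum c Q"
proof -
  let ?F = "{Q. vertex_cover V E Q \<and> S \<subseteq> Q}"
  have "?F \<subseteq> Pow V"
    unfolding vertex_cover_def by blast
  then have finite: "finite ?F"
    by (rule finite_subset) (simp add: finite_V)
  have nonempty: "?F \<noteq> {}"
    using assms edge_vertices unfolding vertex_cover_def by blast
  have "opt_cover c S \<in> ?F"
    unfolding opt_cover_def using finite nonempty by (rule arg_min_if_finite(1))
  then show "vertex_cover V E (opt_cover c S)" "S \<subseteq> opt_cover c S"
    by simp_all
  show "sum c (opt_cover c S) \<le> sum c Q" if "vertex_cover V E Q" "S \<subseteq> Q"
    unfolding opt_cover_def using finite nonempty by (rule arg_min_least) (simp add: that)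
qed

lemma opt_cost_eq: "opt_cost V E l r c w = sum c (opt_cover c (mandatory_set w))"
proof -
  let ?F = "{Q. vertex_cover V E Q \<and> mandatory_set w \<subseteq> Q}"
  have "mandatory_set w = {v. mandatory V E l r w v}"
    unfolding mandatory_set_def mandatory_def by blast
  then have feasible: "{Q. feasible V E l r w Q} = ?F"
    by (simp add: feasible_iff_cover_of_mandatory)
  have "?F \<subseteq> Pow V"
    unfolding vertex_cover_def by blast
  then have "finite (sum c ` ?F)"
    by (intro finite_imageI, rule finite_subset) (simp add: finite_V)
  then show ?thesis
    unfolding opt_cost_def feasible
    by (rule Min_eqI) (use opt_cover[OF mandatory_set_subset] in auto)
qed

end

section \<open>Random weights\<close>

lemma indep_vars_PiM_components:
  assumes "\<And>i. i \<in> I \<Longrightarrow> prob_space (M i)"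
  shows "prob_space.indep_vars (PiM I M) M (\<lambda>i \<omega>. \<omega> i) I"
proof -
  interpret prob_space "PiM I M"
    using assms by (rule prob_space_PiM)
  show ?thesis
  proof (cases "I = {}")
    case True
    show ?thesis
      unfolding indep_vars_def indep_sets_def using True by simp
  next
    case False
    have "distr (PiM I M) (PiM I M) (\<lambda>\<omega>. restrict \<omega> I) = distr (PiM I M) (PiM I M) (\<lambda>\<omega>. \<omega>)"
      by (intro distr_cong) (auto simp: space_PiM PiE_restrict)
    also have "\<dots> = PiM I (\<lambda>i. distr (PiM I M) (M i) (\<lambda>\<omega>. \<omega> i))"
      using assms by (simp add: distr_PiM_component cong: PiM_cong)
    finally show ?thesis
      using False by (subst indep_vars_iff_distr_eq_PiM') auto
  qed
qed

lemma measure_PiM_restrict_disjoint_indep: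
  assumes "\<And>i. i \<in> I \<Longrightarrow> prob_space (M i)"
    and "J \<inter> K = {}" "J \<subseteq> I" "K \<subseteq> I"
    and "X \<in> sets (PiM J M)" "Y \<in> sets (PiM K M)"
  shows "measure (PiM I M) {\<omega> \<in> space (PiM I M). restrict \<omega> J \<in> X \<and> restrict \<omega> K \<in> Y} =
    measure (PiM I M) {\<omega> \<in> space (PiM I M). restrict \<omega> J \<in> X} *
    measure (PiM I M) {\<omega> \<in> space (PiM I M). restrict \<omega> K \<in> Y}"
proof -
  interpret prob_space "PiM I M"
    using assms(1) by (rule prob_space_PiM)
  have "indep_var (PiM J M) (\<lambda>\<omega>. restrict \<omega> J) (PiM K M) (\<lambda>\<omega>. restrict \<omega> K)"
    using indep_var_restrict[OF indep_vars_PiM_components[OF assms(1)] assms(2-4)] by simp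
  from indep_varD[OF this assms(5,6)] show ?thesis
    by (simp add: vimage_def Int_def conj_commute)
qed

locale random_orientation_instance = orientation_instance V E l r
  for V :: "'a set" and E l r +
  fixes d :: "'a \<Rightarrow> real measure"
  assumes distributions: "\<forall>v \<in> V. prob_space (d v) \<and> sets (d v) = sets borel"
begin

sublocale prob_space "PiM V d"
  using distributions by (intro prob_space_PiM) auto

definition mandatory_pattern :: "'a \<Rightarrow> ('a \<Rightarrow> real) set" where
  "mandatory_pattern v =
     {f \<in> space (PiM (neighbours v) d). \<exists>u \<in> neighbours v. f u \<in> {l v<..<r v}}"

lemma sets_PiM_Collect_Ex_component:
  assumes "J \<subseteq> I" "I \<subseteq> V" "finite J"
  shows "{f \<in> space (PiM I d). \<exists>u \<in> J. f u \<in> {a<..<b}} \<in> sets (PiM I d)"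
proof (rule sets.sets_Collect_finite_Ex)
  fix u assume "u \<in> J"
  then have "u \<in> I" and "sets (d u) = sets borel"
    using assms distributions by auto
  then show "{f \<in> space (PiM I d). f u \<in> {a<..<b}} \<in> sets (PiM I d)"
    by (intro sets_Collect_single) simp_all
qed (rule assms(3))

lemma mandatory_pattern_sets: "mandatory_pattern v \<in> sets (PiM (neighbours v) d)"
  unfolding mandatory_pattern_def
  using neighbours_subset finite_neighbours by (intro sets_PiM_Collect_Ex_component) auto

lemma mandatory_event_eq:
  assumes "v \<in> V"
  shows "{w \<in> space (PiM V d). mandatory V E l r w v} =
    {w \<in> space (PiM V d). restrict w (neighbours v) \<in> mandatory_pattern v}"
proof -
  have "restrict w (neighbours v) \<in> space (PiM (neighbours v) d)" if "w \<in> space (PiM V d)" for w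
    using that neighbours_subset by (auto simp: space_PiM restrict_PiE_iff PiE_iff)
  then show ?thesis
    using assms by (auto simp: mandatory_iff mandatory_pattern_def)
qed

lemma mandatory_event: "{w \<in> space (PiM V d). mandatory V E l r w v} \<in> events"
proof (cases "v \<in> V")
  case True
  then have "{w \<in> space (PiM V d). mandatory V E l r w v} =
    {w \<in> space (PiM V d). \<exists>u \<in> neighbours v. w u \<in> {l v<..<r v}}"
    by (simp add: mandatory_iff)
  also have "\<dots> \<in> events"
    using neighbours_subset finite_neighbours by (intro sets_PiM_Collect_Ex_component) auto
  finally show ?thesis .
next
  case False
  then have "{w \<in> space (PiM V d). mandatory V E l r w v} = {}"
    unfolding mandatory_def by blast
  then show ?thesis
    by (simp only: sets.empty_sets)
qed

lemma measurable_mandatory_set: "mandatory_set \<in> measurable (PiM V d) (count_space (Pow V))"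
proof -
  have coordinate: "{w \<in> space (PiM V d). mandatory V E l r w v \<longleftrightarrow> v \<in> S} \<in> events" for v S
  proof (cases "v \<in> S")
    case True
    then show ?thesis
      using mandatory_event by simp
  next
    case False
    then have "{w \<in> space (PiM V d). mandatory V E l r w v \<longleftrightarrow> v \<in> S} =
      space (PiM V d) - {w \<in> space (PiM V d). mandatory V E l r w v}"
      by blast
    then show ?thesis
      using mandatory_event by (simp only: sets.Diff sets.top)
  qed
  have "mandatory_set -` {S} \<inter> space (PiM V d) \<in> events" if "S \<in> Pow V" for S
  proof -
    have "mandatory_set -` {S} \<inter> space (PiM V d) =
      {w \<in> space (PiM V d). \<forall>v \<in> V. mandatory V E l r w v \<longleftrightarrow> v \<in> S}"
      using that unfolding mandatory_set_def by auto
    also have "\<dots> \<in> events"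
      using coordinate finite_V by (rule sets.sets_Collect_finite_All)
    finally show ?thesis .
  qed
  then show ?thesis
    using finite_V by (subst measurable_count_space_eq2) (auto simp: mandatory_set_def)
qed

lemma integrable_mandatory_set: "integrable (PiM V d) (\<lambda>w. h (mandatory_set w) :: real)"
proof (rule integrable_const_bound)
  show "AE w in PiM V d. norm (h (mandatory_set w)) \<le> (\<Sum>S\<in>Pow V. \<bar>h S\<bar>)"
    using finite_V by (intro AE_I2) (auto simp: mandatory_set_def intro!: member_le_sum)
  show "(\<lambda>w. h (mandatory_set w)) \<in> borel_measurable (PiM V d)"
    using measurable_mandatory_set by (rule measurable_compose) simp
qed

lemma expectation_of_bool_mandatory_set:
  "expectation (\<lambda>w. of_bool (P (mandatory_set w))) = prob {w \<in> space (PiM V d). P (mandatory_set w)}"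
proof -
  let ?A = "{w \<in> space (PiM V d). P (mandatory_set w)}"
  have "expectation (\<lambda>w. of_bool (P (mandatory_set w))) = expectation (indicator ?A)"
    by (intro Bochner_Integration.integral_cong) auto
  also have "\<dots> = prob (?A \<inter> space (PiM V d))"
    by (rule Bochner_Integration.integral_indicator)
  also have "?A \<inter> space (PiM V d) = ?A"
    by blast
  finally show ?thesis .
qed

lemma expectation_of_bool_mandatory:
  "expectation (\<lambda>w. of_bool (v \<in> mandatory_set w)) = mand_prob V E l r d v"
  unfolding expectation_of_bool_mandatory_set[of "\<lambda>S. v \<in> S"]
  by (simp add: mand_prob_def mandatory_set_def mandatory_def)

text \<open>Adjacent vertices of a bipartite graph have disjoint neighbourhoods, so their mandatory
  events depend on disjoint sets of coordinates.\<close>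
lemma mand_prob_mult:
  assumes "bipartite V E" and "(u, v) \<in> E"
  shows "prob {w \<in> space (PiM V d). u \<in> mandatory_set w \<and> v \<in> mandatory_set w} =
    mand_prob V E l r d u * mand_prob V E l r d v"
proof -
  have "u \<in> V" "v \<in> V"
    using assms(2) edge_vertices by auto
  then have "{w \<in> space (PiM V d). u \<in> mandatory_set w \<and> v \<in> mandatory_set w} =
    {w \<in> space (PiM V d). restrict w (neighbours u) \<in> mandatory_pattern u \<and>
      restrict w (neighbours v) \<in> mandatory_pattern v}"
    using mandatory_event_eq[of u] mandatory_event_eq[of v] unfolding mandatory_set_def by blast
  also have "prob \<dots> = mand_prob V E l r d u * mand_prob V E l r d v"
    using distributions bipartite_edge_neighbours_disjoint[OF assms] neighbours_subset
      mandatory_pattern_sets \<open>u \<in> V\<close> \<open>v \<in> V\<close>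
    by (subst measure_PiM_restrict_disjoint_indep)
       (auto simp: mand_prob_def mandatory_event_eq)
  finally show ?thesis .
qed

definition opt_prob :: "('a \<Rightarrow> real) \<Rightarrow> 'a \<Rightarrow> real" where
  "opt_prob c v = expectation (\<lambda>w. of_bool (v \<in> opt_cover c (mandatory_set w)))"

lemma mand_prob_le_opt_prob: "mand_prob V E l r d v \<le> opt_prob c v"
proof -
  have "mand_prob V E l r d v = expectation (\<lambda>w. of_bool (v \<in> mandatory_set w))"
    by (rule expectation_of_bool_mandatory[symmetric])
  also have "\<dots> \<le> opt_prob c v"
    unfolding opt_prob_def using opt_cover(2)[OF mandatory_set_subset]
    by (intro integral_mono integrable_mandatory_set) auto
  finally show ?thesis .
qed

lemma expected_opt_cost:
  "expectation (opt_cost V E l r c) = (\<Sum>v\<in>V. c v * opt_prob c v)"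
proof -
  have integrand: "opt_cost V E l r c w = (\<Sum>v\<in>V. c v * of_bool (v \<in> opt_cover c (mandatory_set w)))"
    for w
  proof -
    have "opt_cover c (mandatory_set w) \<subseteq> V"
      using opt_cover(1)[OF mandatory_set_subset] unfolding vertex_cover_def by blast
    then have "V \<inter> {v. v \<in> opt_cover c (mandatory_set w)} = opt_cover c (mandatory_set w)"
      by blast
    then show ?thesis
      unfolding opt_cost_eq using finite_V by simp
  qed
  have "expectation (opt_cost V E l r c) =
    expectation (\<lambda>w. \<Sum>v\<in>V. c v * of_bool (v \<in> opt_cover c (mandatory_set w)))"
    using integrand by (intro Bochner_Integration.integral_cong) auto
  also have "\<dots> = (\<Sum>v\<in>V. c v * opt_prob c v)"
  proof -
    have "integrable (PiM V d) (\<lambda>w. c v * of_bool (v \<in> opt_cover c (mandatory_set w)))" for v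
      by (rule integrable_mandatory_set)
    then show ?thesis
      unfolding opt_prob_def by (simp add: Bochner_Integration.integral_sum)
  qed
  finally show ?thesis .
qed

lemma expected_vc_alg_cost:
  "expectation (vc_alg_cost V E l r c C) = sum c C + (\<Sum>v\<in>V - C. c v * mand_prob V E l r d v)"
proof -
  let ?f = "\<lambda>S. \<Sum>v\<in>V - C. c v * of_bool (v \<in> S)"
  have integrand: "vc_alg_cost V E l r c C w = sum c C + ?f (mandatory_set w)" for w
  proof -
    have "{v \<in> V - C. mandatory V E l r w v} = (V - C) \<inter> {v. v \<in> mandatory_set w}"
      unfolding mandatory_set_def by blast
    then show ?thesis
      unfolding vc_alg_cost_def using finite_V by simp
  qed
  have "expectation (vc_alg_cost V E l r c C) = expectation (\<lambda>w. sum c C + ?f (mandatory_set w))"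
    using integrand by (intro Bochner_Integration.integral_cong) auto
  also have "\<dots> = sum c C + expectation (\<lambda>w. ?f (mandatory_set w))"
    using integrable_mandatory_set[of ?f] by (simp add: prob_space)
  also have "expectation (\<lambda>w. ?f (mandatory_set w)) =
    (\<Sum>v\<in>V - C. c v * expectation (\<lambda>w. of_bool (v \<in> mandatory_set w)))"
  proof -
    have "integrable (PiM V d) (\<lambda>w. c v * of_bool (v \<in> mandatory_set w))" for v
      by (rule integrable_mandatory_set)
    then show ?thesis
      by (simp add: Bochner_Integration.integral_sum)
  qed
  finally show ?thesis
    by (simp add: expectation_of_bool_mandatory)
qed

lemma opt_prob_edge:
  assumes "bipartite V E" and "(u, v) \<in> E"
  shows "1 + mand_prob V E l r d u * mand_prob V E l r d v \<le> opt_prob c u + opt_prob c v"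
proof -
  let ?both = "\<lambda>S. u \<in> S \<and> v \<in> S"
  let ?covered = "\<lambda>S. of_bool (u \<in> opt_cover c S) + (of_bool (v \<in> opt_cover c S) :: real)"
  have "1 + of_bool (?both (mandatory_set w)) \<le> ?covered (mandatory_set w)" for w
    using opt_cover(1,2)[OF mandatory_set_subset[of w], of c] assms(2) unfolding vertex_cover_def by auto
  then have "expectation (\<lambda>w. 1 + of_bool (?both (mandatory_set w))) \<le> expectation (\<lambda>w. ?covered (mandatory_set w))"
    by (intro integral_mono integrable_mandatory_set[of "\<lambda>S. 1 + of_bool (?both S)"]
        integrable_mandatory_set[of ?covered])
  moreover have "expectation (\<lambda>w. 1 + of_bool (?both (mandatory_set w))) =
    1 + mand_prob V E l r d u * mand_prob V E l r d v"
    using integrable_mandatory_set[of "\<lambda>S. of_bool (?both S)"]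
    by (simp add: prob_space expectation_of_bool_mandatory_set[of ?both] mand_prob_mult[OF assms])
  moreover have "expectation (\<lambda>w. ?covered (mandatory_set w)) = opt_prob c u + opt_prob c v"
    unfolding opt_prob_def
    using integrable_mandatory_set[of "\<lambda>S. of_bool (u \<in> opt_cover c S)"]
      integrable_mandatory_set[of "\<lambda>S. of_bool (v \<in> opt_cover c S)"]
    by simp
  ultimately show ?thesis
    by simp
qed

lemma bestvc_weight_le:
  assumes "bipartite V E" and "\<forall>v \<in> V. 0 \<le> c v" and "bestvc_cover V E l r c d C"
  shows "(\<Sum>v\<in>C. (1 - mand_prob V E l r d v) * c v) \<le>
    (\<Sum>v\<in>V. c v * (4/3 * opt_prob c v - mand_prob V E l r d v))"
proof -
  let ?p = "mand_prob V E l r d"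
  define x where "x v = cover_weight (?p v) (opt_prob c v)" for v
  have p: "0 \<le> ?p v" "?p v \<le> 1" "?p v \<le> opt_prob c v" for v
    using mand_prob_le_opt_prob unfolding mand_prob_def by (simp_all add: prob_le_1)
  obtain A where A: "\<forall>(a, b) \<in> E. a \<in> A \<longleftrightarrow> b \<notin> A"
    using assms(1) unfolding bipartite_def by blast
  have "1 \<le> x u + x v" if "(u, v) \<in> E" for u v
    unfolding x_def using p opt_prob_edge[OF assms(1) that] by (intro cover_weight_edge) auto
  then have "\<forall>(u, v) \<in> E. u \<in> V \<and> v \<in> V \<and> (u \<in> A \<longleftrightarrow> v \<notin> A) \<and> 1 \<le> x u + x v"
    using edge_vertices A by blast
  moreover have "\<forall>v \<in> V. 0 \<le> x v \<and> x v \<le> 1"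
    unfolding x_def using p cover_weight_bounds by blast
  ultimately obtain C' where C': "vertex_cover V E C'"
    "(\<Sum>v\<in>C'. (1 - ?p v) * c v) \<le> (\<Sum>v\<in>V. (1 - ?p v) * c v * x v)"
    using bipartite_fractional_cover_rounding[OF finite_V] by blast
  have "(\<Sum>v\<in>C. (1 - ?p v) * c v) \<le> (\<Sum>v\<in>C'. (1 - ?p v) * c v)"
    using assms(3) C'(1) unfolding bestvc_cover_def by blast
  also have "\<dots> \<le> (\<Sum>v\<in>V. (1 - ?p v) * c v * x v)"
    by (rule C'(2))
  also have "\<dots> \<le> (\<Sum>v\<in>V. c v * (4/3 * opt_prob c v - ?p v))"
  proof (rule sum_mono)
    fix v assume "v \<in> V"
    then have "c v * ((1 - ?p v) * x v) \<le> c v * (4/3 * opt_prob c v - ?p v)"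
      unfolding x_def using assms(2) p cover_weight_cost by (intro mult_left_mono) auto
    then show "(1 - ?p v) * c v * x v \<le> c v * (4/3 * opt_prob c v - ?p v)"
      by (simp only: ac_simps)
  qed
  finally show ?thesis .
qed

end

theorem theorem4p1:
  fixes V :: "'a set" and E :: "('a \<times> 'a) set"
    and l r c :: "'a \<Rightarrow> real" and d :: "'a \<Rightarrow> real measure" and C :: "'a set"
  assumes "finite V"
    and "\<forall>(u, v) \<in> E. u \<in> V \<and> v \<in> V \<and> u \<noteq> v"
    and "bipartite V E"
    and "\<forall>v \<in> V. c v \<ge> 0"
    and "\<forall>v \<in> V. l v < r v"
    and "\<forall>v \<in> V. prob_space (d v) \<and> sets (d v) = sets borel"
    and "\<forall>v \<in> V. \<forall>x. measure (d v) {x} = 0"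
    and "\<forall>v \<in> V. measure (d v) {l v<..<r v} = 1"
    and "\<forall>v \<in> V. \<forall>a b. l v \<le> a \<and> a < b \<and> b \<le> r v \<longrightarrow> measure (d v) {a<..<b} > 0"
    and "\<forall>(u, v) \<in> E. {l u<..<r u} \<inter> {l v<..<r v} \<noteq> {}
           \<and> \<not> {l u<..<r u} \<subseteq> {l v<..<r v} \<and> \<not> {l v<..<r v} \<subseteq> {l u<..<r u}"
    and "bestvc_cover V E l r c d C"
  shows "(\<integral>w. vc_alg_cost V E l r c C w \<partial>(PiM V d))
           \<le> 4 / 3 * (\<integral>w. opt_cost V E l r c w \<partial>(PiM V d))"
proof -
  interpret random_orientation_instance V E l r d
    using assms(1,2,5,6,10) by unfold_locales auto
  let ?p = "mand_prob V E l r d"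
  have "C \<subseteq> V"
    using assms(11) unfolding bestvc_cover_def vertex_cover_def by blast
  then have "(\<Sum>v\<in>V. c v * ?p v) = (\<Sum>v\<in>V - C. c v * ?p v) + (\<Sum>v\<in>C. c v * ?p v)"
    using finite_V by (rule sum.subset_diff)
  moreover have "(\<Sum>v\<in>C. (1 - ?p v) * c v) = sum c C - (\<Sum>v\<in>C. c v * ?p v)"
    unfolding left_diff_distrib sum_subtractf by (simp add: mult.commute)
  ultimately have "expectation (vc_alg_cost V E l r c C) = (\<Sum>v\<in>V. c v * ?p v) + (\<Sum>v\<in>C. (1 - ?p v) * c v)"
    unfolding expected_vc_alg_cost by linarith
  also have "\<dots> \<le> (\<Sum>v\<in>V. c v * ?p v) + (\<Sum>v\<in>V. c v * (4/3 * opt_prob c v - ?p v))"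
    using bestvc_weight_le[OF assms(3,4,11)] by linarith
  also have "\<dots> = (\<Sum>v\<in>V. 4/3 * (c v * opt_prob c v))"
    unfolding sum.distrib[symmetric] by (intro sum.cong) (simp_all add: algebra_simps)
  also have "\<dots> = 4 / 3 * expectation (opt_cost V E l r c)"
    unfolding expected_opt_cost sum_distrib_left ..
  finally show ?thesis .
qed

end
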